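(* Let $\overrightarrow{U}(t)$ be a closed unit timelike dual curve in the 3-dimensional dual Lorentzian space with dual Frenet frame $\{\overrightarrow{U_1},\overrightarrow{U_2},\overrightarrow{U_3}\}$, dual curvature $\kappa$ and dual torsion $\tau$, let $\Phi=\varphi+\varepsilon\varphi^*$ be a constant dual number, let $(V_1)$ be the parallel ruled surface of $(U_1)$, corresponding to $\overrightarrow{V_1}=\cosh\Phi\,\overrightarrow{U_1}+\sinh\Phi\,\overrightarrow{U_3}$, and let $(V_2)$ be the closed ruled surface corresponding to $\overrightarrow{V_2}=\overrightarrow{U_2}$. With $P=p+\varepsilon p^*=\kappa\cosh\Phi+\tau\sinh\Phi$ and $Q=q+\varepsilon q^*=-\kappa\sinh\Phi-\tau\cosh\Phi$, the pitch, the dual angle of pitch and the drall of $(V_2)$ are $$L_{V_2}=0,\qquad \Lambda_{V_2}=0,\qquad P_{V_2}=\frac{qq^*-pp^*}{q^2-p^2}.$$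
   Context: Dual numbers are $\lambda+\varepsilon\lambda^*$ with $\lambda,\lambda^*\in\mathbb{R}$ and $\varepsilon^2=0$; dual vectors are $\overrightarrow{A}=\overrightarrow{a}+\varepsilon\overrightarrow{a}^*$ with $\overrightarrow{a},\overrightarrow{a}^*\in\mathbb{R}^3$. The Lorentzian inner product on $\mathbb{R}^3$ is $\langle a,b\rangle=-a_1b_1+a_2b_2+a_3b_3$, extended to dual vectors by $\langle \overrightarrow{A},\overrightarrow{B}\rangle=\langle\overrightarrow{a},\overrightarrow{b}\rangle+\varepsilon(\langle\overrightarrow{a},\overrightarrow{b}^*\rangle+\langle\overrightarrow{a}^*,\overrightarrow{b}\rangle)$. For a dual number $\Phi=\varphi+\varepsilon\varphi^*$: $\sinh\Phi=\sinh\varphi+\varepsilon\varphi^*\cosh\varphi$, $\cosh\Phi=\cosh\varphi+\varepsilon\varphi^*\sinh\varphi$. The closed unit timelike dual curve $\overrightarrow{U}(t)$ (integrals $\oint$ over one closed period of $t$) has Frenet frame $\overrightarrow{U_1}=\overrightarrow{U}$ (timelike), $\overrightarrow{U_2},\overrightarrow{U_3}$ (spacelike), mutually orthogonal unit dual vectors, satisfying $\overrightarrow{U_1}'=\kappa\overrightarrow{U_2}$, $\overrightarrow{U_2}'=\kappa\overrightarrow{U_1}-\tau\overrightarrow{U_3}$, $\overrightarrow{U_3}'=\tau\overrightarrow{U_2}$. Set $\overrightarrow{V_3}=-\sinh\Phi\,\overrightarrow{U_1}-\cosh\Phi\,\overrightarrow{U_3}$; then $\overrightarrow{V_1}'=P\overrightarrow{V_2}$,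 $\overrightarrow{V_2}'=P\overrightarrow{V_1}-Q\overrightarrow{V_3}$, $\overrightarrow{V_3}'=Q\overrightarrow{V_2}$. Write $\overrightarrow{V_i}=\overrightarrow{v_i}+\varepsilon\overrightarrow{v_i}^*$. The dual Steiner vector is taken (frame vectors written outside the integrals) as $\overrightarrow{D}=\overrightarrow{d}+\varepsilon\overrightarrow{d}^*=\overrightarrow{U_1}\oint\tau\,dt-\overrightarrow{U_3}\oint\kappa\,dt=-\overrightarrow{V_1}\oint Q\,dt+\overrightarrow{V_3}\oint P\,dt$, so $\overrightarrow{d}=-\overrightarrow{v_1}\oint q\,dt+\overrightarrow{v_3}\oint p\,dt$, $\overrightarrow{d}^*=-\overrightarrow{v_1}\oint q^*dt-\overrightarrow{v_1}^*\oint q\,dt+\overrightarrow{v_3}\oint p^*dt+\overrightarrow{v_3}^*\oint p\,dt$. For the closed ruled surface corresponding to a unit dual curve $\overrightarrow{X}=\overrightarrow{x}+\varepsilon\overrightarrow{x}^*$: pitch $L_X=\langle\overrightarrow{d},\overrightarrow{x}^*\rangle+\langle\overrightarrow{d}^*,\overrightarrow{x}\rangle$, dual angle of pitch $\Lambda_X=-\langle\overrightarrow{D},\overrightarrow{X}\rangle$, drall $P_X=\langle d\overrightarrow{x},d\overrightarrow{x}^*\rangle/\langle d\overrightarrow{x},d\overrightarrow{x}\rangle$. *)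

theory Defs
  imports "HOL-Analysis.Analysis"
begin

text \<open>Dual numbers \<lambda> + \<epsilon>\<lambda>* are pairs (\<lambda>, \<lambda>*); dual vectors a + \<epsilon>a* are pairs (a, a*)
  of vectors in R^3.\<close>

type_synonym dnum = "real \<times> real"
type_synonym dvec = "(real^3) \<times> (real^3)"

definition linner :: "real^3 \<Rightarrow> real^3 \<Rightarrow> real" where
  "linner a b = - (a$1 * b$1) + a$2 * b$2 + a$3 * b$3"

definition dmult :: "dnum \<Rightarrow> dnum \<Rightarrow> dnum" where
  "dmult x y = (fst x * fst y, fst x * snd y + snd x * fst y)"

definition dadd :: "dnum \<Rightarrow> dnum \<Rightarrow> dnum" where
  "dadd x y = (fst x + fst y, snd x + snd y)"

definition dneg :: "dnum \<Rightarrow> dnum" where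
  "dneg x = (- fst x, - snd x)"

definition dsinh :: "dnum \<Rightarrow> dnum" where
  "dsinh x = (sinh (fst x), snd x * cosh (fst x))"

definition dcosh :: "dnum \<Rightarrow> dnum" where
  "dcosh x = (cosh (fst x), snd x * sinh (fst x))"

definition dscale :: "dnum \<Rightarrow> dvec \<Rightarrow> dvec" where
  "dscale l X = (fst l *\<^sub>R fst X, fst l *\<^sub>R snd X + snd l *\<^sub>R fst X)"

definition dvadd :: "dvec \<Rightarrow> dvec \<Rightarrow> dvec" where
  "dvadd X Y = (fst X + fst Y, snd X + snd Y)"

definition dinner :: "dvec \<Rightarrow> dvec \<Rightarrow> dnum" where
  "dinner X Y = (linner (fst X) (fst Y), linner (fst X) (snd Y) + linner (snd X) (fst Y))"

definition dvec_deriv :: "(real \<Rightarrow> dvec) \<Rightarrow> dvec \<Rightarrow> real \<Rightarrow> bool" where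
  "dvec_deriv X X' t \<longleftrightarrow>
     ((\<lambda>s. fst (X s)) has_vector_derivative fst X') (at t) \<and>
     ((\<lambda>s. snd (X s)) has_vector_derivative snd X') (at t)"

definition cint :: "real \<Rightarrow> (real \<Rightarrow> real) \<Rightarrow> real" where
  "cint T f = integral {0..T} f"

text \<open>Dual Steiner vector D = - V1 \<oint>Q + V3 \<oint>P (frame vectors outside integrals),
  with \<oint>Q = \<oint>q + \<epsilon>\<oint>q*.\<close>
definition steiner :: "real \<Rightarrow> (real \<Rightarrow> dvec) \<Rightarrow> (real \<Rightarrow> dvec) \<Rightarrow> (real \<Rightarrow> dnum) \<Rightarrow> (real \<Rightarrow> dnum) \<Rightarrow> real \<Rightarrow> dvec" where
  "steiner T V1 V3 P Q t =
     dvadd (dscale (dneg (cint T (\<lambda>s. fst (Q s)), cint T (\<lambda>s. snd (Q s)))) (V1 t))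
           (dscale (cint T (\<lambda>s. fst (P s)), cint T (\<lambda>s. snd (P s))) (V3 t))"

definition pitch :: "dvec \<Rightarrow> dvec \<Rightarrow> real" where
  "pitch D X = linner (fst D) (snd X) + linner (snd D) (fst X)"

definition angle_of_pitch :: "dvec \<Rightarrow> dvec \<Rightarrow> dnum" where
  "angle_of_pitch D X = dneg (dinner D X)"

definition drall :: "(real \<Rightarrow> dvec) \<Rightarrow> real \<Rightarrow> real" where
  "drall X t =
     (let a = vector_derivative (\<lambda>s. fst (X s)) (at t);
          b = vector_derivative (\<lambda>s. snd (X s)) (at t)
      in linner a b / linner a a)"

end

theory Submission
  imports Defs
begin

text \<open>The Steiner vector is a dual combination of V1 and V3, both dual-orthogonal to V2 = U2, so
  the whole dual product of the Steiner vector with V2 vanishes; its real part is minus the angle of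
  pitch and its dual part is the pitch. For the drall, the Frenet equation gives
  dV2 = \<kappa> U1 - \<tau> U3, whose dual Lorentzian square is \<tau>^2 - \<kappa>^2; the drall is half its dual
  part over its real part, and \<tau>^2 - \<kappa>^2 = Q^2 - P^2 because (P, Q) arises from (\<kappa>, -\<tau>) by a
  dual hyperbolic rotation.\<close>

lemma linner_commute: "linner x y = linner y x"
  by (simp add: linner_def algebra_simps)

lemma linner_add_left [simp]: "linner (x + y) z = linner x z + linner y z"
  and linner_scaleR_left [simp]: "linner (c *\<^sub>R x) z = c * linner x z"
  by (simp_all add: linner_def algebra_simps)

lemma dinner_commute: "dinner X Y = dinner Y X"
  by (simp add: dinner_def linner_commute)

lemma dinner_dvadd_left: "dinner (dvadd X Y) Z = dadd (dinner X Z) (dinner Y Z)"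
  by (simp add: dinner_def dvadd_def dadd_def)

lemma dinner_dscale_left: "dinner (dscale l X) Z = dmult l (dinner X Z)"
  by (simp add: dinner_def dscale_def dmult_def algebra_simps)

lemma dinner_dvadd_right: "dinner Z (dvadd X Y) = dadd (dinner Z X) (dinner Z Y)"
  by (simp add: dinner_commute[of Z] dinner_dvadd_left)

lemma dinner_dscale_right: "dinner Z (dscale l X) = dmult l (dinner Z X)"
  by (simp add: dinner_commute[of Z] dinner_dscale_left)

lemma dinner_dual_combination_eq_0:
  assumes "dinner X Z = (0, 0)" and "dinner Y Z = (0, 0)"
  shows "dinner (dvadd (dscale a X) (dscale b Y)) Z = (0, 0)"
  using assms by (simp add: dinner_dvadd_left dinner_dscale_left dmult_def dadd_def)

lemma pitch_eq_snd_dinner: "pitch D X = snd (dinner D X)"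
  by (simp add: pitch_def dinner_def)

lemma dinner_square_timelike_spacelike_combination:
  assumes "dinner A A = (-1, 0)" and "dinner B B = (1, 0)" and "dinner A B = (0, 0)"
  shows "dinner (dvadd (dscale k A) (dscale (dneg r) B)) (dvadd (dscale k A) (dscale (dneg r) B))
           = ((fst r)\<^sup>2 - (fst k)\<^sup>2, 2 * (fst r * snd r - fst k * snd k))"
proof -
  have "dinner B A = (0, 0)"
    using assms(3) by (simp add: dinner_commute)
  then show ?thesis
    using assms
    by (simp add: dinner_dvadd_left dinner_dvadd_right dinner_dscale_left dinner_dscale_right
        dmult_def dadd_def dneg_def power2_eq_square algebra_simps)
qed

lemma drall_eq_dinner_derivative:
  assumes "dvec_deriv X W t"
  shows "drall X t = snd (dinner W W) / (2 * fst (dinner W W))"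
proof -
  have "vector_derivative (\<lambda>s. fst (X s)) (at t) = fst W"
    and "vector_derivative (\<lambda>s. snd (X s)) (at t) = snd W"
    using assms vector_derivative_at unfolding dvec_deriv_def by blast+
  then show ?thesis
    by (simp add: drall_def Let_def dinner_def linner_commute[of "snd W"])
qed

lemma drall_timelike_spacelike_combination:
  assumes "dvec_deriv X (dvadd (dscale k A) (dscale (dneg r) B)) t"
    and "dinner A A = (-1, 0)" and "dinner B B = (1, 0)" and "dinner A B = (0, 0)"
  shows "drall X t = (fst r * snd r - fst k * snd k) / ((fst r)\<^sup>2 - (fst k)\<^sup>2)"
  unfolding drall_eq_dinner_derivative[OF assms(1)]
    dinner_square_timelike_spacelike_combination[OF assms(2-4)] fst_conv snd_conv
  by (rule mult_divide_mult_cancel_left) simp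

lemma dual_hyperbolic_rotation_invariant:
  fixes k r \<Phi> :: dnum
  defines "P \<equiv> dadd (dmult k (dcosh \<Phi>)) (dmult r (dsinh \<Phi>))"
    and "Q \<equiv> dadd (dneg (dmult k (dsinh \<Phi>))) (dneg (dmult r (dcosh \<Phi>)))"
  shows "(fst Q)\<^sup>2 - (fst P)\<^sup>2 = (fst r)\<^sup>2 - (fst k)\<^sup>2"
    and "fst Q * snd Q - fst P * snd P = fst r * snd r - fst k * snd k"
proof -
  have hyp: "(cosh (fst \<Phi>))\<^sup>2 - (sinh (fst \<Phi>))\<^sup>2 = 1"
    by (simp add: cosh_square_eq)
  show "(fst Q)\<^sup>2 - (fst P)\<^sup>2 = (fst r)\<^sup>2 - (fst k)\<^sup>2"
    unfolding P_def Q_def dadd_def dmult_def dneg_def dsinh_def dcosh_def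
    using hyp by simp algebra
  show "fst Q * snd Q - fst P * snd P = fst r * snd r - fst k * snd k"
    unfolding P_def Q_def dadd_def dmult_def dneg_def dsinh_def dcosh_def
    using hyp by simp algebra
qed

theorem theorem2p2:
  fixes U1 U2 U3 :: "real \<Rightarrow> dvec"
    and \<kappa> \<tau> :: "real \<Rightarrow> dnum"
    and \<Phi> :: dnum
    and T :: real
  assumes period: "T > 0"
    and closed: "\<And>t. U1 (t + T) = U1 t" "\<And>t. U2 (t + T) = U2 t" "\<And>t. U3 (t + T) = U3 t"
    and unit1: "\<And>t. dinner (U1 t) (U1 t) = (-1, 0)"
    and unit2: "\<And>t. dinner (U2 t) (U2 t) = (1, 0)"
    and unit3: "\<And>t. dinner (U3 t) (U3 t) = (1, 0)"
    and orth12: "\<And>t. dinner (U1 t) (U2 t) = (0, 0)"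
    and orth13: "\<And>t. dinner (U1 t) (U3 t) = (0, 0)"
    and orth23: "\<And>t. dinner (U2 t) (U3 t) = (0, 0)"
    and frenet1: "\<And>t. dvec_deriv U1 (dscale (\<kappa> t) (U2 t)) t"
    and frenet2: "\<And>t. dvec_deriv U2 (dvadd (dscale (\<kappa> t) (U1 t)) (dscale (dneg (\<tau> t)) (U3 t))) t"
    and frenet3: "\<And>t. dvec_deriv U3 (dscale (\<tau> t) (U2 t)) t"
  defines "V1 \<equiv> (\<lambda>t. dvadd (dscale (dcosh \<Phi>) (U1 t)) (dscale (dsinh \<Phi>) (U3 t)))"
    and "V2 \<equiv> U2"
    and "V3 \<equiv> (\<lambda>t. dvadd (dscale (dneg (dsinh \<Phi>)) (U1 t)) (dscale (dneg (dcosh \<Phi>)) (U3 t)))"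
    and "P \<equiv> (\<lambda>t. dadd (dmult (\<kappa> t) (dcosh \<Phi>)) (dmult (\<tau> t) (dsinh \<Phi>)))"
    and "Q \<equiv> (\<lambda>t. dadd (dneg (dmult (\<kappa> t) (dsinh \<Phi>))) (dneg (dmult (\<tau> t) (dcosh \<Phi>))))"
  shows "\<forall>t. pitch (steiner T V1 V3 P Q t) (V2 t) = 0
           \<and> angle_of_pitch (steiner T V1 V3 P Q t) (V2 t) = (0, 0)
           \<and> drall V2 t = (fst (Q t) * snd (Q t) - fst (P t) * snd (P t))
                           / ((fst (Q t))\<^sup>2 - (fst (P t))\<^sup>2)"
proof
  fix t
  have "dinner (U3 t) (U2 t) = (0, 0)"
    using orth23 by (simp add: dinner_commute)
  then have "dinner (V1 t) (V2 t) = (0, 0)" and "dinner (V3 t) (V2 t) = (0, 0)"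
    using orth12 unfolding V1_def V2_def V3_def by (simp_all add: dinner_dual_combination_eq_0)
  then have steiner_orth: "dinner (steiner T V1 V3 P Q t) (V2 t) = (0, 0)"
    unfolding steiner_def by (rule dinner_dual_combination_eq_0)
  have "drall V2 t = (fst (\<tau> t) * snd (\<tau> t) - fst (\<kappa> t) * snd (\<kappa> t))
                     / ((fst (\<tau> t))\<^sup>2 - (fst (\<kappa> t))\<^sup>2)"
    unfolding V2_def using frenet2 unit1 unit3 orth13
    by (rule drall_timelike_spacelike_combination)
  also have "\<dots> = (fst (Q t) * snd (Q t) - fst (P t) * snd (P t))
                     / ((fst (Q t))\<^sup>2 - (fst (P t))\<^sup>2)"
    unfolding P_def Q_def dual_hyperbolic_rotation_invariant ..
  finally have "drall V2 t = (fst (Q t) * snd (Q t) - fst (P t) * snd (P t))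
                     / ((fst (Q t))\<^sup>2 - (fst (P t))\<^sup>2)" .
  moreover have "pitch (steiner T V1 V3 P Q t) (V2 t) = 0"
    by (simp only: pitch_eq_snd_dinner steiner_orth snd_conv)
  moreover have "angle_of_pitch (steiner T V1 V3 P Q t) (V2 t) = (0, 0)"
    by (simp only: angle_of_pitch_def steiner_orth dneg_def fst_conv snd_conv minus_zero)
  ultimately show "pitch (steiner T V1 V3 P Q t) (V2 t) = 0
           \<and> angle_of_pitch (steiner T V1 V3 P Q t) (V2 t) = (0, 0)
           \<and> drall V2 t = (fst (Q t) * snd (Q t) - fst (P t) * snd (P t))
                           / ((fst (Q t))\<^sup>2 - (fst (P t))\<^sup>2)"
    by blast
qed

end
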